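(* Let $X\neq\{0\}$ be a normed space. (i) If $X$ satisfies the $t$-Hanner inequality for some $1<t\le2$, then $K^*_{q,t}(X)=C^*(q,t)$ for every $2\le q<\infty$, and $K_{t,p}(X)=1$ for every $1<p\le t'$, where $\frac1t+\frac1{t'}=1$. (ii) If $X$ satisfies the $r$-Hanner inequality for some $2\le r<\infty$, then $K_{p,r}(X)=C(p,r)$ for every $1<p\le2$, and $K^*_{r,q}(X)=1$ for every $r'\le q<\infty$, where $\frac1r+\frac1{r'}=1$.
   Context: For $1<t\le2$, a normed space $X$ satisfies the $t$-Hanner inequality if $\|x+y\|^t+\|x-y\|^t\ge(\|x\|+\|y\|)^t+\big|\|x\|-\|y\|\big|^t$ for all $x,y\in X$; for $2\le r<\infty$, it satisfies the $r$-Hanner inequality if $\|x+y\|^r+\|x-y\|^r\le(\|x\|+\|y\|)^r+\big|\|x\|-\|y\|\big|^r$ for all $x,y\in X$. For a normed space $X$: for $1<t\le2$ and $1<p<\infty$, $K_{t,p}(X)$ is the smallest constant $K\ge0$ such that $\big(\frac{\|x+y\|^p+\|x-y\|^p}{2}\big)^{1/p}\le(\|x\|^t+\|Ky\|^t)^{1/t}$ for all $x,y\in X$; for $2\le r<\infty$ and $1<q<\infty$, $K^*_{r,q}(X)$ is the smallest constant $K>0$ such that $\big(\frac{\|x+y\|^q+\|x-y\|^q}{2}\big)^{1/q}\ge(\|x\|^r+\|K^{-1}y\|^r)^{1/r}$ for all $x,y\in X$. $C(t,p):=K_{t,p}(\mathbb C)$ and $C^*(r,q):=K^*_{r,q}(\mathbb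 C)$, i.e. the same best constants for $X=\mathbb C$ with the absolute value. *)

theory Defs
  imports "HOL-Analysis.Analysis"
begin

definition t_Hanner :: "'a::real_normed_vector itself \<Rightarrow> real \<Rightarrow> bool" where
  "t_Hanner _ t \<longleftrightarrow> (\<forall>x y :: 'a.
     norm (x + y) powr t + norm (x - y) powr t \<ge>
     (norm x + norm y) powr t + \<bar>norm x - norm y\<bar> powr t)"

definition r_Hanner :: "'a::real_normed_vector itself \<Rightarrow> real \<Rightarrow> bool" where
  "r_Hanner _ r \<longleftrightarrow> (\<forall>x y :: 'a.
     norm (x + y) powr r + norm (x - y) powr r \<le>
     (norm x + norm y) powr r + \<bar>norm x - norm y\<bar> powr r)"

definition K_tp :: "'a::real_normed_vector itself \<Rightarrow> real \<Rightarrow> real \<Rightarrow> real" where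
  "K_tp _ t p = Inf {K. K \<ge> 0 \<and> (\<forall>x y :: 'a.
     ((norm (x + y) powr p + norm (x - y) powr p) / 2) powr (1 / p) \<le>
     (norm x powr t + norm (K *\<^sub>R y) powr t) powr (1 / t))}"

definition Kstar_rq :: "'a::real_normed_vector itself \<Rightarrow> real \<Rightarrow> real \<Rightarrow> real" where
  "Kstar_rq _ r q = Inf {K. K > 0 \<and> (\<forall>x y :: 'a.
     ((norm (x + y) powr q + norm (x - y) powr q) / 2) powr (1 / q) \<ge>
     (norm x powr r + norm (inverse K *\<^sub>R y) powr r) powr (1 / r))}"

definition C_tp :: "real \<Rightarrow> real \<Rightarrow> real" where
  "C_tp t p = K_tp TYPE(complex) t p"

definition Cstar_rq :: "real \<Rightarrow> real \<Rightarrow> real" where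
  "Cstar_rq r q = Kstar_rq TYPE(complex) r q"

end

theory Submission
  imports Defs
begin

text \<open>The proof has three ingredients.
  (1) Clarkson's scalar inequality \<open>(1 + y^r)^(p-1) \<le> ((1+y)^p + (1-y)^p)/2\<close> for
      \<open>1 < p \<le> 2\<close>, \<open>r = p/(p-1)\<close>, \<open>0 \<le> y \<le> 1\<close>, proved from the generalised binomial series
      (the pairs of consecutive terms are nonnegative by Young's inequality). Combined with
      the monotonicity of power means it yields Clarkson-type inequalities in every space
      satisfying a Hanner inequality; these show that \<open>K = 1\<close> is admissible, and testing
      \<open>x = 0\<close> shows that no smaller constant is, which gives the two statements "\<open>= 1\<close>".
  (2) In a nonzero space satisfying the \<open>r\<close>-Hanner (resp. \<open>t\<close>-Hanner) inequality, the constant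
      \<open>K_tp p r\<close> (resp. \<open>Kstar_rq q t\<close>) coincides with an explicit scalar constant: the
      Hanner inequality bounds \<open>\<parallel>x + y\<parallel>, \<parallel>x - y\<parallel>\<close> by \<open>\<parallel>x\<parallel> + \<parallel>y\<parallel>, \<bar>\<parallel>x\<parallel> - \<parallel>y\<parallel>\<bar>\<close>, and the
      extremal configuration is realised on any line.
  (3) \<open>\<complex>\<close>, as an inner product space, satisfies both Hanner inequalities (two-point
      majorization for the convex or concave function \<open>z \<mapsto> z^(t/2)\<close>), so by (2) its
      constants \<open>C_tp\<close>, \<open>Cstar_rq\<close> equal the same scalar constants.\<close>

lemma powr_powr_inverse_exp:
  fixes z s :: real
  assumes "0 \<le> z" "0 < s"
  shows "(z powr s) powr (1 / s) = z"
  using assms by (simp add: powr_powr)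

lemma powr_sum_scale:
  fixes a b c s :: real
  assumes "0 \<le> a" "0 \<le> b" "0 \<le> c" "0 < s"
  shows "((c * a) powr s + (c * b) powr s) powr (1 / s) = c * (a powr s + b powr s) powr (1 / s)"
proof -
  have "(c * a) powr s + (c * b) powr s = c powr s * (a powr s + b powr s)"
    using assms by (simp add: powr_mult algebra_simps)
  also have "\<dots> powr (1 / s) = c * (a powr s + b powr s) powr (1 / s)"
    using assms by (simp add: powr_mult powr_powr_inverse_exp)
  finally show ?thesis .
qed

text \<open>Passing to squares, so that norms of sums in inner product spaces become accessible.\<close>
lemma powr_as_square_powr:
  fixes z t :: real
  assumes "0 \<le> z"
  shows "z powr t = (z ^ 2) powr (t / 2)"
proof -
  have "(z ^ 2) powr (t / 2) = (z powr 2) powr (t / 2)"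
    using assms by (cases "z = 0") (simp_all add: powr_realpow)
  thus ?thesis by (simp add: powr_powr)
qed

text \<open>The library proves convexity of \<open>x powr s\<close> only on \<open>{0<..}\<close>; the Hanner-type
  arguments need the closed half-line, since the norms involved may vanish.\<close>
lemma convex_on_powr_nonneg:
  fixes s :: real
  assumes "1 \<le> s"
  shows "convex_on {0..} (\<lambda>x. x powr s)"
proof (rule convex_on_linorderI)
  fix t x y :: real
  assume t: "0 < t" "t < 1" and xy: "x \<in> {0..}" "y \<in> {0..}" "x < y"
  show "((1 - t) *\<^sub>R x + t *\<^sub>R y) powr s \<le> (1 - t) * x powr s + t * y powr s"
  proof (cases "x = 0")
    case True
    have "t powr s \<le> t powr 1" using t assms by (intro powr_mono') auto
    hence "t powr s * y powr s \<le> t * y powr s" using t by (intro mult_right_mono) auto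
    thus ?thesis using True t xy by (simp add: powr_mult)
  next
    case False
    thus ?thesis using convex_onD[OF powr_convex[OF assms], of t x y] t xy by auto
  qed
qed auto

lemma concave_on_powr_nonneg:
  fixes s :: real
  assumes "0 < s" "s \<le> 1"
  shows "concave_on {0..} (\<lambda>x. x powr s)"
proof (rule concave_on_linorderI)
  have pos: "concave_on {0<..} (\<lambda>x::real. x powr s)"
  proof (rule f''_le0_imp_concave)
    fix x :: real assume "x \<in> {0<..}"
    show "((\<lambda>x. x powr s) has_real_derivative s * x powr (s - 1)) (at x)"
      using \<open>x \<in> {0<..}\<close> by (auto intro!: derivative_eq_intros)
    show "((\<lambda>x. s * x powr (s - 1)) has_real_derivative s * ((s - 1) * x powr (s - 2))) (at x)"
      using \<open>x \<in> {0<..}\<close> by (auto intro!: derivative_eq_intros simp: diff_diff_eq)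
    show "s * ((s - 1) * x powr (s - 2)) \<le> 0"
      using assms by (intro mult_nonneg_nonpos mult_nonpos_nonneg) auto
  qed auto
  fix t x y :: real
  assume t: "0 < t" "t < 1" and xy: "x \<in> {0..}" "y \<in> {0..}" "x < y"
  show "((1 - t) *\<^sub>R x + t *\<^sub>R y) powr s \<ge> (1 - t) * x powr s + t * y powr s"
  proof (cases "x = 0")
    case True
    have "t powr 1 \<le> t powr s" using t assms by (intro powr_mono') auto
    hence "t * y powr s \<le> t powr s * y powr s" using t by (intro mult_right_mono) auto
    thus ?thesis using True t xy by (simp add: powr_mult)
  next
    case False
    thus ?thesis using concave_onD[OF pos, of t x y] t xy by auto
  qed
qed auto

lemma convex_two_point:
  fixes f :: "real \<Rightarrow> real"
  assumes f: "convex_on {0..} f" and mu: "0 \<le> m" "m \<le> u" "u \<le> M"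
  shows "f u + f (m + M - u) \<le> f m + f M"
proof -
  define l where "l = (M - u) / (M - m)"
  have l: "0 \<le> l" "l \<le> 1" unfolding l_def using mu by (auto simp: divide_le_eq_1)
  have lM: "l * (M - m) = M - u" unfolding l_def using mu by (cases "M = m") auto
  have at_u: "(1 - l) *\<^sub>R M + l *\<^sub>R m = u" and at_v: "(1 - l) *\<^sub>R m + l *\<^sub>R M = m + M - u"
    using lM by (simp_all add: algebra_simps)
  have "f ((1 - l) *\<^sub>R M + l *\<^sub>R m) \<le> (1 - l) * f M + l * f m"
    using convex_onD[OF f l] mu by simp
  moreover have "f ((1 - l) *\<^sub>R m + l *\<^sub>R M) \<le> (1 - l) * f m + l * f M"
    using convex_onD[OF f l] mu by simp
  ultimately show ?thesis unfolding at_u at_v by (simp add: algebra_simps)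
qed

lemma concave_two_point:
  fixes f :: "real \<Rightarrow> real"
  assumes f: "concave_on {0..} f" and mu: "0 \<le> m" "m \<le> u" "u \<le> M"
  shows "f m + f M \<le> f u + f (m + M - u)"
  using convex_two_point[OF f[unfolded concave_on_def] mu] by simp

text \<open>The two-term power mean \<open>((A^P + B^P)/2)^(1/P)\<close> is nondecreasing in the exponent
  (Jensen's inequality at the midpoint for the convex function \<open>z \<mapsto> z^(Q/P)\<close>).\<close>
lemma power_mean_mono:
  fixes A B P Q :: real
  assumes "0 < P" "P \<le> Q" "0 \<le> A" "0 \<le> B"
  shows "((A powr P + B powr P) / 2) powr (1 / P) \<le> ((A powr Q + B powr Q) / 2) powr (1 / Q)"
proof -
  define s where "s = Q / P"
  have s: "1 \<le> s" "0 < s" unfolding s_def using assms by auto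
  have "((A powr P + B powr P) / 2) powr s
        \<le> (A powr P) powr s / 2 + (B powr P) powr s / 2"
    using convex_onD[OF convex_on_powr_nonneg[OF s(1)], of "1/2" "A powr P" "B powr P"]
    by (simp add: add_divide_distrib)
  also have "\<dots> = (A powr Q + B powr Q) / 2"
    unfolding s_def using assms by (simp add: powr_powr add_divide_distrib)
  finally have "(((A powr P + B powr P) / 2) powr s) powr (1 / Q) \<le> ((A powr Q + B powr Q) / 2) powr (1 / Q)"
    using assms by (intro powr_mono2) auto
  moreover have "(((A powr P + B powr P) / 2) powr s) powr (1 / Q) = ((A powr P + B powr P) / 2) powr (1 / P)"
    unfolding s_def using assms by (simp add: powr_powr)
  ultimately show ?thesis by simp
qed

text \<open>In an inner product space both sides of the Hanner inequalities are sums \<open>g u + g v\<close>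
  with \<open>g z = z powr (t/2)\<close>: on the left \<open>u, v = S \<plusminus> 2\<bar>x \<bullet> y\<bar>\<close>, on the right
  \<open>m, M = S \<mp> 2\<parallel>x\<parallel> \<parallel>y\<parallel>\<close>, where \<open>S = \<parallel>x\<parallel>^2 + \<parallel>y\<parallel>^2\<close>. By Cauchy-Schwarz, \<open>m \<le> u \<le> M\<close>.\<close>
lemma inner_hanner_terms:
  fixes x y :: "'b::real_inner" and t :: real
  defines "S \<equiv> norm x ^ 2 + norm y ^ 2" and "P \<equiv> norm x * norm y" and "c \<equiv> \<bar>x \<bullet> y\<bar>"
  shows "norm (x + y) powr t + norm (x - y) powr t
           = (S + 2 * c) powr (t / 2) + (S - 2 * P + (S + 2 * P) - (S + 2 * c)) powr (t / 2)"
    and "(norm x + norm y) powr t + \<bar>norm x - norm y\<bar> powr t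
           = (S - 2 * P) powr (t / 2) + (S + 2 * P) powr (t / 2)"
    and "0 \<le> S - 2 * P" "S - 2 * P \<le> S + 2 * c" "S + 2 * c \<le> S + 2 * P"
proof -
  have sum_sq: "norm (x + y) ^ 2 = S + 2 * (x \<bullet> y)" and diff_sq: "norm (x - y) ^ 2 = S - 2 * (x \<bullet> y)"
    unfolding S_def
    by (simp_all add: power2_norm_eq_inner inner_add_left inner_add_right inner_diff_left inner_diff_right inner_commute[of y x])
  have "norm (x + y) powr t + norm (x - y) powr t
      = (S + 2 * (x \<bullet> y)) powr (t / 2) + (S - 2 * (x \<bullet> y)) powr (t / 2)"
    unfolding powr_as_square_powr[OF norm_ge_zero, of "x + y"] powr_as_square_powr[OF norm_ge_zero, of "x - y"]
      sum_sq diff_sq ..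
  also have "\<dots> = (S + 2 * c) powr (t / 2) + (S - 2 * c) powr (t / 2)"
    unfolding c_def by (cases "x \<bullet> y \<ge> 0") (simp_all add: add.commute)
  finally show "norm (x + y) powr t + norm (x - y) powr t
           = (S + 2 * c) powr (t / 2) + (S - 2 * P + (S + 2 * P) - (S + 2 * c)) powr (t / 2)"
    by simp
  have plus_sq: "(norm x + norm y) ^ 2 = S + 2 * P" and minus_sq: "\<bar>norm x - norm y\<bar> ^ 2 = S - 2 * P"
    unfolding S_def P_def by (simp_all add: power2_eq_square algebra_simps)
  show "(norm x + norm y) powr t + \<bar>norm x - norm y\<bar> powr t
           = (S - 2 * P) powr (t / 2) + (S + 2 * P) powr (t / 2)"
    unfolding powr_as_square_powr[OF add_nonneg_nonneg[OF norm_ge_zero norm_ge_zero]]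
      powr_as_square_powr[OF abs_ge_zero, of "norm x - norm y" t] plus_sq minus_sq
    by (rule add.commute)
  have "0 \<le> (norm x - norm y) ^ 2" by simp
  thus "0 \<le> S - 2 * P" unfolding S_def P_def by (simp add: power2_eq_square algebra_simps)
  have "c \<le> P" unfolding c_def P_def by (rule Cauchy_Schwarz_ineq2)
  thus "S - 2 * P \<le> S + 2 * c" "S + 2 * c \<le> S + 2 * P" by (auto simp: c_def)
qed

lemma inner_t_Hanner:
  assumes "0 < t" "t \<le> 2"
  shows "t_Hanner TYPE('b::real_inner) t"
  unfolding t_Hanner_def
proof (intro allI)
  fix x y :: 'b
  note terms = inner_hanner_terms[of x y]
  have "concave_on {0..} (\<lambda>z::real. z powr (t / 2))"
    using assms by (intro concave_on_powr_nonneg) auto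
  then show "(norm x + norm y) powr t + \<bar>norm x - norm y\<bar> powr t \<le> norm (x + y) powr t + norm (x - y) powr t"
    unfolding terms(1,2) by (rule concave_two_point[OF _ terms(3-5)])
qed

lemma inner_r_Hanner:
  assumes "2 \<le> r"
  shows "r_Hanner TYPE('b::real_inner) r"
  unfolding r_Hanner_def
proof (intro allI)
  fix x y :: 'b
  note terms = inner_hanner_terms[of x y]
  have "convex_on {0..} (\<lambda>z::real. z powr (r / 2))"
    using assms by (intro convex_on_powr_nonneg) auto
  then show "norm (x + y) powr r + norm (x - y) powr r \<le> (norm x + norm y) powr r + \<bar>norm x - norm y\<bar> powr r"
    unfolding terms(1,2) by (rule convex_two_point[OF _ terms(3-5)])
qed

lemma gbinomial_Suc_recurrence:
  fixes a :: "'a::field_char_0"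
  shows "of_nat (Suc n) * (a gchoose Suc n) = (a - of_nat n) * (a gchoose n)"
  using gbinomial_mult_1[of a n] by (simp add: algebra_simps)

text \<open>For \<open>0 \<le> a \<le> 1\<close> the generalised binomial coefficients alternate in sign after the first;
  in particular the odd-indexed ones are nonnegative.\<close>
lemma gbinomial_odd_nonneg:
  fixes a :: real
  assumes "0 \<le> a" "a \<le> 1"
  shows "(a gchoose (2 * k + 1)) \<ge> 0"
proof (induction k)
  case 0
  then show ?case using assms by simp
next
  case (Suc k)
  have "of_nat (Suc (2 * k + 1)) * (a gchoose Suc (2 * k + 1)) = (a - of_nat (2 * k + 1)) * (a gchoose (2 * k + 1))"
    by (rule gbinomial_Suc_recurrence)
  also have "\<dots> \<le> 0"
    using Suc assms by (intro mult_nonpos_nonneg) auto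
  finally have even_nonpos: "(a gchoose (2 * k + 2)) \<le> 0"
    by (simp add: mult_le_0_iff del: of_nat_Suc)
  have "0 \<le> (a - of_nat (2 * k + 2)) * (a gchoose (2 * k + 2))"
    using even_nonpos assms by (intro mult_nonpos_nonpos) auto
  also have "\<dots> = of_nat (Suc (2 * k + 2)) * (a gchoose Suc (2 * k + 2))"
    by (rule gbinomial_Suc_recurrence[symmetric])
  finally show ?case
    by (simp add: zero_le_mult_iff del: of_nat_Suc)
qed

text \<open>Weighted AM-GM (Young) in the form needed for the paired series terms below: with
  \<open>r = p/(p-1)\<close>, the number \<open>(y^r)^(N-1)\<close> is the weighted geometric mean of \<open>y^N\<close> and
  \<open>(y^r)^N\<close> with weights \<open>p/N\<close> and \<open>(N-p)/N\<close>.\<close>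
lemma young_series_term:
  fixes p r y :: real and N :: nat
  assumes "1 < p" "p \<le> 2" "r * (p - 1) = p" "0 \<le> y" "N \<ge> 2"
  shows "of_nat N * (y powr r) ^ (N - 1) \<le> p * y ^ N + (of_nat N - p) * (y powr r) ^ N"
proof (cases "y = 0")
  case True
  then show ?thesis using assms by (simp add: power_0_left)
next
  case False
  hence yp: "y > 0" using assms by auto
  have Np: "real N > 0" using assms by simp
  have "(y ^ N) powr (p / N) * ((y powr r) ^ N) powr ((N - p) / N) = (y powr r) ^ (N - 1)"
  proof -
    have "(y ^ N) powr (p / N) = y powr p"
      using yp Np by (simp add: powr_realpow[symmetric] powr_powr)
    moreover have "((y powr r) ^ N) powr ((N - p) / N) = y powr (r * (N - p))"
      using yp Np by (simp add: powr_realpow[symmetric] powr_powr)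
    moreover have "(y powr r) ^ (N - 1) = y powr (r * (real N - 1))"
      using yp assms by (simp add: powr_realpow[symmetric] powr_powr of_nat_diff)
    moreover have "p + r * (N - p) = r * (real N - 1)" using assms by (simp add: algebra_simps)
    ultimately show ?thesis by (simp add: powr_add[symmetric])
  qed
  moreover have "(y ^ N) powr (p / N) * ((y powr r) ^ N) powr ((N - p) / N)
          \<le> (p / N) * y ^ N + ((N - p) / N) * (y powr r) ^ N"
    using assms yp Np by (intro Youngs_inequality_0) (auto simp: field_simps)
  ultimately have "N * (y powr r) ^ (N - 1) \<le> N * ((p / N) * y ^ N + ((N - p) / N) * (y powr r) ^ N)"
    using Np by simp
  also have "\<dots> = p * y ^ N + (of_nat N - p) * (y powr r) ^ N" using Np by (simp add: field_simps)
  finally show ?thesis .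
qed

text \<open>The \<open>n\<close>-th term of the binomial series of
  \<open>((1 + y)^p + (1 - y)^p)/2 - (1 + y^r)^(p-1)\<close>: the first part contributes only even powers.\<close>
definition clarkson_term :: "real \<Rightarrow> real \<Rightarrow> real \<Rightarrow> nat \<Rightarrow> real" where
  "clarkson_term p r y n =
     (p gchoose n) * (y ^ n + (- y) ^ n) / 2 - ((p - 1) gchoose n) * (y powr r) ^ n"

text \<open>Grouping the terms with indices \<open>2k+1\<close> and \<open>2k+2\<close>, each group is nonnegative: after
  multiplying by \<open>N = 2k+2\<close> it is \<open>(p-1 choose 2k+1) \<ge> 0\<close> times the Young inequality above.\<close>
lemma clarkson_term_pair_nonneg:
  fixes p r y :: real
  assumes p: "1 < p" "p \<le> 2" and r: "r * (p - 1) = p" and y: "0 \<le> y"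
  shows "0 \<le> clarkson_term p r y (2 * k + 1) + clarkson_term p r y (2 * k + 2)"
proof -
  define N where "N = 2 * k + 2"
  define w where "w = y powr r"
  define c where "c = (p - 1) gchoose (2 * k + 1)"
  have c_nonneg: "c \<ge> 0" unfolding c_def using p by (intro gbinomial_odd_nonneg) auto
  have N_Suc: "N = Suc (2 * k + 1)" unfolding N_def by simp
  have binom_p: "of_nat N * (p gchoose N) = p * c"
    unfolding N_Suc c_def using gbinomial_absorption[of "2 * k + 1" p] by simp
  have binom_p1: "of_nat N * ((p - 1) gchoose N) = (p - of_nat N) * c"
    unfolding N_Suc c_def using gbinomial_Suc_recurrence[of "2 * k + 1" "p - 1"]
    by (simp add: algebra_simps)
  have odd_term: "clarkson_term p r y (2 * k + 1) = - c * w ^ (N - 1)"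
    unfolding clarkson_term_def c_def w_def N_def by simp
  have even_term: "clarkson_term p r y (2 * k + 2) = (p gchoose N) * y ^ N - ((p - 1) gchoose N) * w ^ N"
    unfolding clarkson_term_def w_def N_def by simp
  have "of_nat N * (clarkson_term p r y (2 * k + 1) + clarkson_term p r y (2 * k + 2))
      = (of_nat N * (p gchoose N)) * y ^ N - (of_nat N * ((p - 1) gchoose N)) * w ^ N
          - of_nat N * c * w ^ (N - 1)"
    unfolding odd_term even_term by (simp add: algebra_simps)
  also have "\<dots> = c * (p * y ^ N + (of_nat N - p) * w ^ N - of_nat N * w ^ (N - 1))"
    unfolding binom_p binom_p1 by (simp add: algebra_simps)
  also have "\<dots> \<ge> 0"
    using young_series_term[OF p r y, of N] c_nonneg unfolding w_def N_def by simp
  finally show ?thesis unfolding N_def by (simp add: zero_le_mult_iff)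
qed

text \<open>Clarkson's scalar inequality \<open>(1 + y^r)^(p-1) \<le> ((1+y)^p + (1-y)^p)/2\<close> for
  \<open>1 < p \<le> 2\<close>, \<open>r = p'\<close>, \<open>0 \<le> y < 1\<close>: the series of the difference has nonnegative pair sums.\<close>
lemma clarkson_scalar_lt1:
  fixes p r y :: real
  assumes p: "1 < p" "p \<le> 2" and r: "r * (p - 1) = p" and y: "0 \<le> y" "y < 1"
  shows "(1 + y powr r) powr (p - 1) \<le> ((1 + y) powr p + (1 - y) powr p) / 2"
proof -
  have "0 < r * (p - 1)" using p r by simp
  hence "r > 0" using p by (simp add: zero_less_mult_iff)
  hence w: "0 \<le> y powr r" "y powr r < 1" using y powr_less_mono2[of r y 1] by auto
  have "(\<lambda>n. (p gchoose n) * y ^ n) sums (1 + y) powr p"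
    "(\<lambda>n. (p gchoose n) * (- y) ^ n) sums (1 - y) powr p"
    "(\<lambda>n. ((p - 1) gchoose n) * (y powr r) ^ n) sums (1 + y powr r) powr (p - 1)"
    using y w gen_binomial_real[of y p] gen_binomial_real[of "- y" p]
      gen_binomial_real[of "y powr r" "p - 1"] by simp_all
  hence "clarkson_term p r y sums
           (((1 + y) powr p + (1 - y) powr p) / 2 - (1 + y powr r) powr (p - 1))"
    unfolding clarkson_term_def add_divide_distrib distrib_left
    by (intro sums_diff sums_add sums_divide) auto
  moreover have "clarkson_term p r y 0 = 0" by (simp add: clarkson_term_def)
  ultimately have "(\<lambda>n. clarkson_term p r y (Suc n)) sums
           (((1 + y) powr p + (1 - y) powr p) / 2 - (1 + y powr r) powr (p - 1))"
    by (simp add: sums_Suc_iff)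
  from sums_group[OF this, of 2]
  have "(\<lambda>k. clarkson_term p r y (2 * k + 1) + clarkson_term p r y (2 * k + 2)) sums
           (((1 + y) powr p + (1 - y) powr p) / 2 - (1 + y powr r) powr (p - 1))"
    by (simp add: numeral_2_eq_2 mult.commute)
  from sums_le[OF clarkson_term_pair_nonneg[OF p r y(1)] sums_zero this]
  show ?thesis by simp
qed

text \<open>The endpoint \<open>y = 1\<close> is an equality.\<close>
lemma clarkson_scalar:
  fixes p r y :: real
  assumes p: "1 < p" "p \<le> 2" and r: "r * (p - 1) = p" and y: "0 \<le> y" "y \<le> 1"
  shows "(1 + y powr r) powr (p - 1) \<le> ((1 + y) powr p + (1 - y) powr p) / 2"
proof (cases "y = 1")
  case True
  have "(2::real) powr (p - 1) = 2 powr p / 2" by (simp add: powr_diff)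
  then show ?thesis using True p by simp
next
  case False
  then show ?thesis using clarkson_scalar_lt1[OF p r] y by simp
qed

text \<open>Homogeneous form of Clarkson's inequality for \<open>0 \<le> d \<le> c\<close> (put \<open>y = d/c\<close>) \<dots>\<close>
lemma clarkson_homogeneous_ordered:
  fixes p r c d :: real
  assumes p: "1 < p" "p \<le> 2" and r: "r * (p - 1) = p" and cd: "0 \<le> d" "d \<le> c"
  shows "(c powr r + d powr r) powr (p - 1) \<le> ((c + d) powr p + \<bar>c - d\<bar> powr p) / 2"
proof (cases "c = 0")
    case True
    then show ?thesis using cd p by simp
  next
    case False
    hence c_pos: "c > 0" using cd by simp
    define y where "y = d / c"
    have y: "0 \<le> y" "y \<le> 1" unfolding y_def using cd c_pos by auto
    have d: "d = c * y" unfolding y_def using c_pos by simp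
    have "(c powr r + d powr r) powr (p - 1) = (c powr r * (1 + y powr r)) powr (p - 1)"
      unfolding d using c_pos y by (simp add: powr_mult algebra_simps)
    also have "\<dots> = c powr p * (1 + y powr r) powr (p - 1)"
      using c_pos y by (simp add: powr_mult powr_powr r)
    also have "\<dots> \<le> c powr p * (((1 + y) powr p + (1 - y) powr p) / 2)"
      using clarkson_scalar[OF p r y] by (intro mult_left_mono) auto
    also have "\<dots> = ((c + d) powr p + \<bar>c - d\<bar> powr p) / 2"
    proof -
      have "c + d = c * (1 + y)" "\<bar>c - d\<bar> = c * (1 - y)"
        unfolding d using c_pos y by (simp_all add: algebra_simps)
      hence "(c + d) powr p = c powr p * (1 + y) powr p" "\<bar>c - d\<bar> powr p = c powr p * (1 - y) powr p"
        using c_pos y by (simp_all add: powr_mult)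
      thus ?thesis by (simp add: algebra_simps)
    qed
    finally show ?thesis .
qed

lemma clarkson_homogeneous:
  fixes p r c d :: real
  assumes p: "1 < p" "p \<le> 2" and r: "r * (p - 1) = p" and cd: "0 \<le> c" "0 \<le> d"
  shows "(c powr r + d powr r) powr (p - 1) \<le> ((c + d) powr p + \<bar>c - d\<bar> powr p) / 2"
proof (cases "d \<le> c")
  case True
  then show ?thesis using clarkson_homogeneous_ordered[OF p r cd(2)] by simp
next
  case False
  then show ?thesis using clarkson_homogeneous_ordered[OF p r cd(1), of d]
    by (simp add: add.commute abs_minus_commute)
qed

lemma conjugate_mean_le_hanner_sum:
  fixes t q A B :: real
  assumes t: "1 < t" "t \<le> 2" and q: "q * (t - 1) = t" and AB: "0 \<le> A" "0 \<le> B"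
  shows "((A powr q + B powr q) / 2) powr (1 / q) \<le> ((A + B) powr t + \<bar>A - B\<bar> powr t) powr (1 / t) / 2"
proof -
  define X where "X = (A powr q + B powr q) / 2"
  define Y where "Y = (A + B) powr t + \<bar>A - B\<bar> powr t"
  have "X powr (t - 1) = (A powr q + B powr q) powr (t - 1) / 2 powr (t - 1)"
    unfolding X_def by (simp add: powr_divide)
  also have "\<dots> \<le> (Y / 2) / 2 powr (t - 1)"
    using clarkson_homogeneous[OF t q AB] unfolding Y_def by (intro divide_right_mono) auto
  also have "\<dots> = Y / 2 powr t" by (simp add: powr_diff)
  finally have "(X powr (t - 1)) powr (1 / t) \<le> (Y / 2 powr t) powr (1 / t)"
    using t by (intro powr_mono2) (auto simp: X_def)
  moreover have "(X powr (t - 1)) powr (1 / t) = X powr (1 / q)"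
  proof -
    have "q \<noteq> 0" using q t by auto
    hence "(t - 1) * (1 / t) = 1 / q" using q t by (simp add: field_simps)
    thus ?thesis by (simp add: powr_powr)
  qed
  moreover have "(Y / 2 powr t) powr (1 / t) = Y powr (1 / t) / 2"
    using t by (simp add: Y_def powr_divide powr_powr)
  ultimately show ?thesis unfolding X_def Y_def by simp
qed

lemma hanner_sum_le_conjugate_mean:
  fixes p r A B :: real
  assumes p: "1 < p" "p \<le> 2" and r: "r * (p - 1) = p" and AB: "0 \<le> A" "0 \<le> B"
  shows "((A + B) powr r + \<bar>A - B\<bar> powr r) powr (1 / r) / 2 \<le> ((A powr p + B powr p) / 2) powr (1 / p)"
proof -
  define X where "X = (A powr p + B powr p) / 2"
  define Y where "Y = (A + B) powr r + \<bar>A - B\<bar> powr r"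
  have "(A + B + \<bar>A - B\<bar>) powr p + \<bar>A + B - \<bar>A - B\<bar>\<bar> powr p = 2 powr p * (A powr p + B powr p)"
  proof (cases "B \<le> A")
    case True
    hence "A + B + \<bar>A - B\<bar> = 2 * A" "\<bar>A + B - \<bar>A - B\<bar>\<bar> = 2 * B" using AB by auto
    then show ?thesis using AB by (simp add: powr_mult algebra_simps)
  next
    case False
    hence "A + B + \<bar>A - B\<bar> = 2 * B" "\<bar>A + B - \<bar>A - B\<bar>\<bar> = 2 * A" using AB by auto
    then show ?thesis using AB by (simp add: powr_mult algebra_simps)
  qed
  hence "Y powr (p - 1) \<le> 2 powr p * X"
    using clarkson_homogeneous[OF p r, of "A + B" "\<bar>A - B\<bar>"] AB unfolding X_def Y_def by simp
  hence "(Y powr (p - 1)) powr (1 / p) \<le> (2 powr p * X) powr (1 / p)"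
    using p by (intro powr_mono2) (auto simp: Y_def)
  moreover have "(Y powr (p - 1)) powr (1 / p) = Y powr (1 / r)"
  proof -
    have "r \<noteq> 0" using r p by auto
    hence "(p - 1) * (1 / p) = 1 / r" using r p by (simp add: field_simps)
    thus ?thesis by (simp add: powr_powr)
  qed
  moreover have "(2 powr p * X) powr (1 / p) = 2 * X powr (1 / p)"
    using p by (subst powr_mult) (auto simp: X_def powr_powr)
  ultimately show ?thesis unfolding X_def Y_def by simp
qed

text \<open>Applying a Hanner inequality to the pair \<open>(x + y, x - y)\<close> recovers \<open>2x\<close> and \<open>2y\<close>.\<close>
lemma norm_sum_diff_of_sum_diff:
  fixes x y :: "'a::real_normed_vector"
  shows "norm ((x + y) + (x - y)) = 2 * norm x" "norm ((x + y) - (x - y)) = 2 * norm y"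
proof -
  have "(x + y) + (x - y) = 2 *\<^sub>R x" "(x + y) - (x - y) = 2 *\<^sub>R y"
    by (simp_all add: algebra_simps scaleR_2)
  thus "norm ((x + y) + (x - y)) = 2 * norm x" "norm ((x + y) - (x - y)) = 2 * norm y" by simp_all
qed

lemma t_Hanner_clarkson:
  fixes x y :: "'a::real_normed_vector"
  assumes H: "t_Hanner TYPE('a) t" and t: "1 < t" "t \<le> 2" and p: "1 < p" "p \<le> t / (t - 1)"
  shows "((norm (x + y) powr p + norm (x - y) powr p) / 2) powr (1 / p)
           \<le> (norm x powr t + norm y powr t) powr (1 / t)"
proof -
  define A where "A = norm (x + y)"
  define B where "B = norm (x - y)"
  have AB: "0 \<le> A" "0 \<le> B" unfolding A_def B_def by auto
  have "((A powr p + B powr p) / 2) powr (1 / p) \<le> ((A powr (t / (t - 1)) + B powr (t / (t - 1))) / 2) powr (1 / (t / (t - 1)))"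
    using p AB by (intro power_mean_mono) auto
  also have "\<dots> \<le> ((A + B) powr t + \<bar>A - B\<bar> powr t) powr (1 / t) / 2"
    using t by (intro conjugate_mean_le_hanner_sum AB) auto
  also have "\<dots> \<le> ((2 * norm x) powr t + (2 * norm y) powr t) powr (1 / t) / 2"
  proof -
    have "(A + B) powr t + \<bar>A - B\<bar> powr t \<le> (2 * norm x) powr t + (2 * norm y) powr t"
      using H[unfolded t_Hanner_def, rule_format, of "x + y" "x - y"]
      unfolding A_def B_def norm_sum_diff_of_sum_diff by simp
    thus ?thesis using t by (intro divide_right_mono powr_mono2) auto
  qed
  also have "\<dots> = (norm x powr t + norm y powr t) powr (1 / t)"
    using powr_sum_scale[of "norm x" "norm y" 2 t] t by simp
  finally show ?thesis unfolding A_def B_def .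
qed

lemma r_Hanner_clarkson:
  fixes x y :: "'a::real_normed_vector"
  assumes H: "r_Hanner TYPE('a) r" and r: "2 \<le> r" and q: "r / (r - 1) \<le> q"
  shows "(norm x powr r + norm y powr r) powr (1 / r)
           \<le> ((norm (x + y) powr q + norm (x - y) powr q) / 2) powr (1 / q)"
proof -
  define A where "A = norm (x + y)"
  define B where "B = norm (x - y)"
  have AB: "0 \<le> A" "0 \<le> B" unfolding A_def B_def by auto
  have p: "1 < r / (r - 1)" "r / (r - 1) \<le> 2" "r * (r / (r - 1) - 1) = r / (r - 1)"
    using r by (auto simp: field_simps)
  have "(norm x powr r + norm y powr r) powr (1 / r)
      = ((2 * norm x) powr r + (2 * norm y) powr r) powr (1 / r) / 2"
    using powr_sum_scale[of "norm x" "norm y" 2 r] r by simp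
  also have "\<dots> \<le> ((A + B) powr r + \<bar>A - B\<bar> powr r) powr (1 / r) / 2"
  proof -
    have "(2 * norm x) powr r + (2 * norm y) powr r \<le> (A + B) powr r + \<bar>A - B\<bar> powr r"
      using H[unfolded r_Hanner_def, rule_format, of "x + y" "x - y"]
      unfolding A_def B_def norm_sum_diff_of_sum_diff by simp
    thus ?thesis using r by (intro divide_right_mono powr_mono2) auto
  qed
  also have "\<dots> \<le> ((A powr (r / (r - 1)) + B powr (r / (r - 1))) / 2) powr (1 / (r / (r - 1)))"
    by (rule hanner_sum_le_conjugate_mean[OF p AB])
  also have "\<dots> \<le> ((A powr q + B powr q) / 2) powr (1 / q)"
    using p q AB by (intro power_mean_mono) auto
  finally show ?thesis unfolding A_def B_def .
qed

text \<open>If the defining inequality of \<open>K_tp t p\<close> holds with \<open>K = 1\<close>, the constant is exactly \<open>1\<close>: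
  testing \<open>x = 0\<close>, \<open>y = e \<noteq> 0\<close> shows that no \<open>K < 1\<close> is admissible.\<close>
lemma K_tp_eq_one:
  fixes e :: "'a::real_normed_vector"
  assumes e: "e \<noteq> 0" and tp: "0 < t" "0 < p"
    and admissible: "\<And>x y :: 'a. ((norm (x + y) powr p + norm (x - y) powr p) / 2) powr (1 / p)
                                    \<le> (norm x powr t + norm y powr t) powr (1 / t)"
  shows "K_tp TYPE('a) t p = 1"
  unfolding K_tp_def
proof (rule cInf_eq_minimum)
  show "1 \<in> {K. K \<ge> 0 \<and> (\<forall>x y :: 'a. ((norm (x + y) powr p + norm (x - y) powr p) / 2) powr (1 / p)
                                    \<le> (norm x powr t + norm (K *\<^sub>R y) powr t) powr (1 / t))}"
    using admissible by simp
  fix K assume "K \<in> {K. K \<ge> 0 \<and> (\<forall>x y :: 'a. ((norm (x + y) powr p + norm (x - y) powr p) / 2) powr (1 / p)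
                                    \<le> (norm x powr t + norm (K *\<^sub>R y) powr t) powr (1 / t))}"
  then have "K \<ge> 0" and "((norm (0 + e) powr p + norm (0 - e) powr p) / 2) powr (1 / p)
                         \<le> (norm (0::'a) powr t + norm (K *\<^sub>R e) powr t) powr (1 / t)"
    by blast+
  then have "norm e \<le> K * norm e"
    using tp by (simp add: powr_powr_inverse_exp)
  then show "1 \<le> K" using e by simp
qed

lemma Kstar_rq_eq_one:
  fixes e :: "'a::real_normed_vector"
  assumes e: "e \<noteq> 0" and rq: "0 < r" "0 < q"
    and admissible: "\<And>x y :: 'a. (norm x powr r + norm y powr r) powr (1 / r)
                                    \<le> ((norm (x + y) powr q + norm (x - y) powr q) / 2) powr (1 / q)"
  shows "Kstar_rq TYPE('a) r q = 1"
  unfolding Kstar_rq_def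
proof (rule cInf_eq_minimum)
  show "1 \<in> {K. K > 0 \<and> (\<forall>x y :: 'a. ((norm (x + y) powr q + norm (x - y) powr q) / 2) powr (1 / q)
                                    \<ge> (norm x powr r + norm (inverse K *\<^sub>R y) powr r) powr (1 / r))}"
    using admissible by simp
  fix K assume "K \<in> {K. K > 0 \<and> (\<forall>x y :: 'a. ((norm (x + y) powr q + norm (x - y) powr q) / 2) powr (1 / q)
                                    \<ge> (norm x powr r + norm (inverse K *\<^sub>R y) powr r) powr (1 / r))}"
  then have K: "K > 0" and "((norm (0 + e) powr q + norm (0 - e) powr q) / 2) powr (1 / q)
                         \<ge> (norm (0::'a) powr r + norm (inverse K *\<^sub>R e) powr r) powr (1 / r)"
    by blast+
  then have "inverse K * norm e \<le> norm e"
    using rq by (simp add: powr_powr_inverse_exp)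
  then show "1 \<le> K" using e K by (simp add: field_simps)
qed

definition hanner_K :: "real \<Rightarrow> real \<Rightarrow> real" where
  "hanner_K p r = Inf {K. K \<ge> 0 \<and> (\<forall>a b :: real. 0 \<le> a \<longrightarrow> 0 \<le> b \<longrightarrow>
     (((a + b) powr r + \<bar>a - b\<bar> powr r) / 2) powr (1 / r) \<le> (a powr p + (K * b) powr p) powr (1 / p))}"

definition hanner_Kstar :: "real \<Rightarrow> real \<Rightarrow> real" where
  "hanner_Kstar q t = Inf {K. K > 0 \<and> (\<forall>a b :: real. 0 \<le> a \<longrightarrow> 0 \<le> b \<longrightarrow>
     (a powr q + (inverse K * b) powr q) powr (1 / q) \<le> (((a + b) powr t + \<bar>a - b\<bar> powr t) / 2) powr (1 / t))}"

lemma norm_on_line: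
  fixes e :: "'a::real_normed_vector"
  assumes "e \<noteq> 0" "0 \<le> a" "0 \<le> b"
  shows "norm (a *\<^sub>R sgn e + b *\<^sub>R sgn e) = a + b" "norm (a *\<^sub>R sgn e - b *\<^sub>R sgn e) = \<bar>a - b\<bar>"
    "norm (a *\<^sub>R sgn e) = a"
  using assms by (simp_all add: norm_sgn flip: scaleR_add_left scaleR_diff_left)

text \<open>In a nonzero \<open>r\<close>-Hanner space \<open>K_tp p r\<close> is the scalar constant: the scalar inequality
  follows by restricting to a line, and conversely the \<open>r\<close>-Hanner inequality reduces the
  vector inequality to the scalar one with \<open>a = \<parallel>x\<parallel>\<close>, \<open>b = \<parallel>y\<parallel>\<close>.\<close>
lemma K_tp_eq_hanner_K:
  fixes e :: "'a::real_normed_vector"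
  assumes e: "e \<noteq> 0" and H: "r_Hanner TYPE('a) r" and r: "0 < r"
  shows "K_tp TYPE('a) p r = hanner_K p r"
  unfolding K_tp_def hanner_K_def
proof (intro arg_cong[where f = Inf] Collect_cong conj_cong refl)
  fix K :: real assume K: "0 \<le> K"
  show "(\<forall>x y :: 'a. ((norm (x + y) powr r + norm (x - y) powr r) / 2) powr (1 / r)
                    \<le> (norm x powr p + norm (K *\<^sub>R y) powr p) powr (1 / p))
    \<longleftrightarrow> (\<forall>a b :: real. 0 \<le> a \<longrightarrow> 0 \<le> b \<longrightarrow>
         (((a + b) powr r + \<bar>a - b\<bar> powr r) / 2) powr (1 / r) \<le> (a powr p + (K * b) powr p) powr (1 / p))"
  proof (intro iffI allI impI)
    fix a b :: real
    assume vector: "\<forall>x y :: 'a. ((norm (x + y) powr r + norm (x - y) powr r) / 2) powr (1 / r)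
                    \<le> (norm x powr p + norm (K *\<^sub>R y) powr p) powr (1 / p)"
      and ab: "0 \<le> a" "0 \<le> b"
    show "(((a + b) powr r + \<bar>a - b\<bar> powr r) / 2) powr (1 / r) \<le> (a powr p + (K * b) powr p) powr (1 / p)"
      using vector[rule_format, of "a *\<^sub>R sgn e" "b *\<^sub>R sgn e"] K e ab by (simp add: norm_on_line norm_sgn)
  next
    fix x y :: 'a
    assume scalar: "\<forall>a b :: real. 0 \<le> a \<longrightarrow> 0 \<le> b \<longrightarrow>
         (((a + b) powr r + \<bar>a - b\<bar> powr r) / 2) powr (1 / r) \<le> (a powr p + (K * b) powr p) powr (1 / p)"
    have "((norm (x + y) powr r + norm (x - y) powr r) / 2) powr (1 / r)
       \<le> (((norm x + norm y) powr r + \<bar>norm x - norm y\<bar> powr r) / 2) powr (1 / r)"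
      using H r unfolding r_Hanner_def by (intro powr_mono2 divide_right_mono) auto
    also have "\<dots> \<le> (norm x powr p + norm (K *\<^sub>R y) powr p) powr (1 / p)"
      using scalar K by simp
    finally show "((norm (x + y) powr r + norm (x - y) powr r) / 2) powr (1 / r)
                    \<le> (norm x powr p + norm (K *\<^sub>R y) powr p) powr (1 / p)" .
  qed
qed

lemma Kstar_rq_eq_hanner_Kstar:
  fixes e :: "'a::real_normed_vector"
  assumes e: "e \<noteq> 0" and H: "t_Hanner TYPE('a) t" and t: "0 < t"
  shows "Kstar_rq TYPE('a) q t = hanner_Kstar q t"
  unfolding Kstar_rq_def hanner_Kstar_def
proof (intro arg_cong[where f = Inf] Collect_cong conj_cong refl)
  fix K :: real assume K: "0 < K"
  show "(\<forall>x y :: 'a. (norm x powr q + norm (inverse K *\<^sub>R y) powr q) powr (1 / q)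
                    \<le> ((norm (x + y) powr t + norm (x - y) powr t) / 2) powr (1 / t))
    \<longleftrightarrow> (\<forall>a b :: real. 0 \<le> a \<longrightarrow> 0 \<le> b \<longrightarrow>
         (a powr q + (inverse K * b) powr q) powr (1 / q) \<le> (((a + b) powr t + \<bar>a - b\<bar> powr t) / 2) powr (1 / t))"
  proof (intro iffI allI impI)
    fix a b :: real
    assume vector: "\<forall>x y :: 'a. (norm x powr q + norm (inverse K *\<^sub>R y) powr q) powr (1 / q)
                    \<le> ((norm (x + y) powr t + norm (x - y) powr t) / 2) powr (1 / t)"
      and ab: "0 \<le> a" "0 \<le> b"
    show "(a powr q + (inverse K * b) powr q) powr (1 / q) \<le> (((a + b) powr t + \<bar>a - b\<bar> powr t) / 2) powr (1 / t)"
      using vector[rule_format, of "a *\<^sub>R sgn e" "b *\<^sub>R sgn e"] K e ab by (simp add: norm_on_line norm_sgn)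
  next
    fix x y :: 'a
    assume scalar: "\<forall>a b :: real. 0 \<le> a \<longrightarrow> 0 \<le> b \<longrightarrow>
         (a powr q + (inverse K * b) powr q) powr (1 / q) \<le> (((a + b) powr t + \<bar>a - b\<bar> powr t) / 2) powr (1 / t)"
    have "(norm x powr q + norm (inverse K *\<^sub>R y) powr q) powr (1 / q)
       \<le> (((norm x + norm y) powr t + \<bar>norm x - norm y\<bar> powr t) / 2) powr (1 / t)"
      using scalar K by simp
    also have "\<dots> \<le> ((norm (x + y) powr t + norm (x - y) powr t) / 2) powr (1 / t)"
      using H t unfolding t_Hanner_def by (intro powr_mono2 divide_right_mono) auto
    finally show "(norm x powr q + norm (inverse K *\<^sub>R y) powr q) powr (1 / q)
                    \<le> ((norm (x + y) powr t + norm (x - y) powr t) / 2) powr (1 / t)" .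
  qed
qed

theorem proposition3p5:
  assumes "\<exists>x :: 'a::real_normed_vector. x \<noteq> 0"
  shows "(\<forall>t. 1 < t \<and> t \<le> 2 \<and> t_Hanner TYPE('a) t \<longrightarrow>
            (\<forall>q. 2 \<le> q \<longrightarrow> Kstar_rq TYPE('a) q t = Cstar_rq q t) \<and>
            (\<forall>p. 1 < p \<and> p \<le> t / (t - 1) \<longrightarrow> K_tp TYPE('a) t p = 1))
       \<and> (\<forall>r. 2 \<le> r \<and> r_Hanner TYPE('a) r \<longrightarrow>
            (\<forall>p. 1 < p \<and> p \<le> 2 \<longrightarrow> K_tp TYPE('a) p r = C_tp p r) \<and>
            (\<forall>q. r / (r - 1) \<le> q \<longrightarrow> Kstar_rq TYPE('a) r q = 1))"
proof -
  obtain e :: 'a where e: "e \<noteq> 0" using assms by blast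
  have one: "(1::complex) \<noteq> 0" by simp
  show ?thesis
  proof (intro conjI allI impI; elim conjE)
    fix t q :: real
    assume t: "1 < t" "t \<le> 2" and H: "t_Hanner TYPE('a) t" and "2 \<le> q"
    show "Kstar_rq TYPE('a) q t = Cstar_rq q t"
      using Kstar_rq_eq_hanner_Kstar[OF e H] Kstar_rq_eq_hanner_Kstar[OF one inner_t_Hanner] t
      by (simp add: Cstar_rq_def)
  next
    fix t p :: real
    assume "1 < t" "t \<le> 2" "t_Hanner TYPE('a) t" "1 < p" "p \<le> t / (t - 1)"
    then show "K_tp TYPE('a) t p = 1"
      by (intro K_tp_eq_one[OF e] t_Hanner_clarkson) auto
  next
    fix r p :: real
    assume r: "2 \<le> r" and H: "r_Hanner TYPE('a) r" and "1 < p" "p \<le> 2"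
    show "K_tp TYPE('a) p r = C_tp p r"
      using K_tp_eq_hanner_K[OF e H] K_tp_eq_hanner_K[OF one inner_r_Hanner] r
      by (simp add: C_tp_def)
  next
    fix r q :: real
    assume r: "2 \<le> r" and H: "r_Hanner TYPE('a) r" and q: "r / (r - 1) \<le> q"
    have "0 < r / (r - 1)" using r by simp
    with q have "0 < q" by linarith
    then show "Kstar_rq TYPE('a) r q = 1"
      using r q by (intro Kstar_rq_eq_one[OF e] r_Hanner_clarkson[OF H]) auto
  qed
qed

end
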